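(* Let $A,B\in\mathcal{B}_F$ and $1\le p\le\infty$. Then $d_p(\pi(A),\pi(B))\le 2\,d_p(A,B)$.
   Context: A persistence barcode is a finite multiset of intervals $[x,y]$, $x\le y$; $\mathcal{B}_F$ is the set of barcodes all of whose intervals have finite endpoints. The projection $\pi$ sends $A=\{[x_i^a,y_i^a]\}$ to $\pi(A)=\{[0,y_i^a-x_i^a]\}$. $p$-th Wasserstein distance: pad the smaller barcode with zero-length intervals $[t,t]$ until both have $n_{\max}=\max\{n_a,n_b\}$ intervals; $d_p(A,B)=\big(\min_\gamma\sum_i\max\{|x_i^a-x^b_{\gamma(i)}|^p,|y_i^a-y^b_{\gamma(i)}|^p\}\big)^{1/p}$ for $p<\infty$, $d_\infty(A,B)=\min_\gamma\max_i\max\{|x_i^a-x^b_{\gamma(i)}|,|y_i^a-y^b_{\gamma(i)}|\}$, minima over bijections $\gamma$ (and paddings). *)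

theory Defs
  imports "HOL-Analysis.Analysis" "HOL-Library.Multiset" "HOL-Library.Extended_Real"
begin

text \<open>An interval [x,y] with finite endpoints is a pair (x,y) of reals; a barcode in B_F
  is a finite multiset of such pairs with x \<le> y.\<close>

type_synonym barcode = "(real \<times> real) multiset"

definition barcode_F :: "barcode \<Rightarrow> bool" where
  "barcode_F A \<longleftrightarrow> (\<forall>I \<in># A. fst I \<le> snd I)"

definition proj :: "barcode \<Rightarrow> barcode" where
  "proj A = image_mset (\<lambda>(x, y). (0, y - x)) A"

definition paddings :: "barcode \<Rightarrow> nat \<Rightarrow> barcode set" where
  "paddings A n = {A'. size A' = n \<and> A \<subseteq># A' \<and> (\<forall>I \<in># A' - A. fst I = snd I)}"

text \<open>Matched lists: xs ! i is matched with ys ! i (this covers all bijections).\<close>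
definition matchings :: "barcode \<Rightarrow> barcode \<Rightarrow> ((real \<times> real) list \<times> (real \<times> real) list) set" where
  "matchings A B = {(xs, ys). mset xs \<in> paddings A (max (size A) (size B))
                             \<and> mset ys \<in> paddings B (max (size A) (size B))}"

definition pair_dist :: "real \<times> real \<Rightarrow> real \<times> real \<Rightarrow> real" where
  "pair_dist I J = max \<bar>fst I - fst J\<bar> \<bar>snd I - snd J\<bar>"

definition wasserstein :: "ereal \<Rightarrow> barcode \<Rightarrow> barcode \<Rightarrow> real" where
  "wasserstein p A B =
    (if p = \<infinity> then
       Inf {Max (insert 0 (set (map (\<lambda>(I, J). pair_dist I J) (zip xs ys)))) | xs ys.
              (xs, ys) \<in> matchings A B}
     else
       (Inf {(\<Sum>(I, J) \<leftarrow> zip xs ys. pair_dist I J powr real_of_ereal p) | xs ys.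
              (xs, ys) \<in> matchings A B}) powr (1 / real_of_ereal p))"

end

theory Submission
  imports Defs
begin

text \<open>Projecting an interval to [0, y - x] moves each endpoint of a matched pair by at most
  twice their pair distance, since |(y - x) - (y' - x')| \<le> |x - x'| + |y - y'|. Any matching of
  A and B, with its paddings, is carried by the projection to a matching of the projected barcodes
  (a zero-length padding interval projects to [0,0]), so every matching cost of the projected
  barcodes is bounded by 2, respectively 2 to the power p, times a matching cost of A and B;
  taking infima and p-th roots gives the bound.\<close>

definition proj_interval :: "real \<times> real \<Rightarrow> real \<times> real" where
  "proj_interval = (\<lambda>(x, y). (0, y - x))"

lemma proj_eq_image_mset: "proj A = image_mset proj_interval A"
  by (simp add: proj_def proj_interval_def)

lemma pair_dist_nonneg: "0 \<le> pair_dist I J"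
  by (simp add: pair_dist_def)

lemma pair_dist_proj_interval_le: "pair_dist (proj_interval I) (proj_interval J) \<le> 2 * pair_dist I J"
  by (cases I; cases J) (simp add: pair_dist_def proj_interval_def, smt (verit))

lemma paddings_proj:
  assumes "mset xs \<in> paddings A n"
  shows "mset (map proj_interval xs) \<in> paddings (proj A) n"
proof -
  have sub: "A \<subseteq># mset xs" and size: "size (mset xs) = n"
    and zero_length: "\<forall>I \<in># mset xs - A. fst I = snd I"
    using assms by (auto simp: paddings_def)
  have "image_mset proj_interval (mset xs) =
      image_mset proj_interval A + image_mset proj_interval (mset xs - A)"
    using sub by (metis image_mset_union subset_mset.add_diff_inverse)
  then have "mset (map proj_interval xs) - proj A = image_mset proj_interval (mset xs - A)"
    by (simp add: proj_eq_image_mset)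
  with zero_length have "\<forall>I \<in># mset (map proj_interval xs) - proj A. fst I = snd I"
    by (auto simp: proj_interval_def)
  with sub size show ?thesis
    by (simp add: paddings_def proj_eq_image_mset image_mset_subseteq_mono)
qed

lemma matchings_proj:
  "(xs, ys) \<in> matchings A B \<Longrightarrow>
    (map proj_interval xs, map proj_interval ys) \<in> matchings (proj A) (proj B)"
  using paddings_proj unfolding matchings_def by (auto simp: proj_eq_image_mset)

lemma paddings_nonempty: "size A \<le> n \<Longrightarrow> \<exists>xs. mset xs \<in> paddings A n"
proof -
  assume "size A \<le> n"
  obtain as where "mset as = A" using ex_mset by blast
  then have "mset (as @ replicate (n - size A) (0, 0)) \<in> paddings A n"
    using \<open>size A \<le> n\<close> by (auto simp: paddings_def mset_replicate)
  then show ?thesis by blast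
qed

lemma matchings_nonempty: "\<exists>xs ys. (xs, ys) \<in> matchings A B"
  using paddings_nonempty[of A "max (size A) (size B)"]
    paddings_nonempty[of B "max (size A) (size B)"]
  unfolding matchings_def by auto

lemma cInf_le_mult_cInf:
  fixes S T :: "real set" and c :: real
  assumes "S \<noteq> {}" and "\<forall>t \<in> T. 0 \<le> t" and "0 < c"
    and "\<forall>s \<in> S. \<exists>t \<in> T. t \<le> c * s"
  shows "Inf T \<le> c * Inf S"
proof -
  have "bdd_below T" using assms(2) by (auto intro: bdd_belowI)
  have "Inf T / c \<le> s" if "s \<in> S" for s
  proof -
    obtain t where "t \<in> T" "t \<le> c * s" using assms(4) \<open>s \<in> S\<close> by blast
    then have "Inf T \<le> c * s" using cInf_lower[OF _ \<open>bdd_below T\<close>] by (meson order_trans)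
    then show ?thesis using \<open>0 < c\<close> by (simp add: field_simps)
  qed
  then have "Inf T / c \<le> Inf S" using \<open>S \<noteq> {}\<close> by (intro cInf_greatest) auto
  then show ?thesis using \<open>0 < c\<close> by (simp add: field_simps)
qed

lemma Inf_matching_costs_proj_le:
  fixes cost :: "(real \<times> real) list \<Rightarrow> (real \<times> real) list \<Rightarrow> real"
  assumes "\<And>xs ys. 0 \<le> cost xs ys" and "0 < c"
    and "\<And>xs ys. cost (map proj_interval xs) (map proj_interval ys) \<le> c * cost xs ys"
  shows "Inf {cost xs ys | xs ys. (xs, ys) \<in> matchings (proj A) (proj B)}
    \<le> c * Inf {cost xs ys | xs ys. (xs, ys) \<in> matchings A B}"
  using assms matchings_nonempty[of A B] matchings_proj
  by (intro cInf_le_mult_cInf) blast+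

lemma Inf_matching_costs_nonneg:
  fixes cost :: "(real \<times> real) list \<Rightarrow> (real \<times> real) list \<Rightarrow> real"
  assumes "\<And>xs ys. 0 \<le> cost xs ys"
  shows "0 \<le> Inf {cost xs ys | xs ys. (xs, ys) \<in> matchings A B}"
  using assms matchings_nonempty[of A B] by (intro cInf_greatest) auto

definition bottleneck_cost :: "(real \<times> real) list \<Rightarrow> (real \<times> real) list \<Rightarrow> real" where
  "bottleneck_cost xs ys = Max (insert 0 (set (map (\<lambda>(I, J). pair_dist I J) (zip xs ys))))"

definition power_cost :: "real \<Rightarrow> (real \<times> real) list \<Rightarrow> (real \<times> real) list \<Rightarrow> real" where
  "power_cost r xs ys = (\<Sum>(I, J) \<leftarrow> zip xs ys. pair_dist I J powr r)"

lemma wasserstein_infinity: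
  "wasserstein \<infinity> A B = Inf {bottleneck_cost xs ys | xs ys. (xs, ys) \<in> matchings A B}"
  by (simp add: wasserstein_def bottleneck_cost_def)

lemma wasserstein_finite:
  "p \<noteq> \<infinity> \<Longrightarrow> wasserstein p A B =
    Inf {power_cost (real_of_ereal p) xs ys | xs ys. (xs, ys) \<in> matchings A B}
      powr (1 / real_of_ereal p)"
  by (simp add: wasserstein_def power_cost_def)

lemma zip_map_proj_interval:
  "zip (map proj_interval xs) (map proj_interval ys) =
    map (\<lambda>(I, J). (proj_interval I, proj_interval J)) (zip xs ys)"
  by (simp add: zip_map_map)

lemma bottleneck_cost_nonneg: "0 \<le> bottleneck_cost xs ys"
  by (simp add: bottleneck_cost_def)

lemma bottleneck_cost_proj_le:
  "bottleneck_cost (map proj_interval xs) (map proj_interval ys) \<le> 2 * bottleneck_cost xs ys"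
  unfolding bottleneck_cost_def zip_map_proj_interval
proof (rule Max.boundedI)
  fix d
  assume "d \<in> insert 0 (set (map (\<lambda>(I, J). pair_dist I J)
      (map (\<lambda>(I, J). (proj_interval I, proj_interval J)) (zip xs ys))))"
  then consider "d = 0"
    | I J where "(I, J) \<in> set (zip xs ys)" "d = pair_dist (proj_interval I) (proj_interval J)"
    by auto
  then show "d \<le> 2 * Max (insert 0 (set (map (\<lambda>(I, J). pair_dist I J) (zip xs ys))))"
  proof cases
    case 2
    then have "pair_dist I J \<le> Max (insert 0 (set (map (\<lambda>(I, J). pair_dist I J) (zip xs ys))))"
      by (intro Max_ge) force+
    then show ?thesis using 2 pair_dist_proj_interval_le[of I J] by linarith
  qed simp
qed simp_all

lemma power_cost_nonneg: "0 \<le> power_cost r xs ys"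
  by (auto simp: power_cost_def intro!: sum_list_nonneg)

lemma power_cost_proj_le:
  assumes "0 \<le> r"
  shows "power_cost r (map proj_interval xs) (map proj_interval ys) \<le> 2 powr r * power_cost r xs ys"
proof -
  have "power_cost r (map proj_interval xs) (map proj_interval ys) =
      (\<Sum>(I, J) \<leftarrow> zip xs ys. pair_dist (proj_interval I) (proj_interval J) powr r)"
    unfolding power_cost_def zip_map_proj_interval by (simp add: o_def split_def)
  also have "\<dots> \<le> (\<Sum>(I, J) \<leftarrow> zip xs ys. 2 powr r * pair_dist I J powr r)"
  proof (rule sum_list_mono, clarify)
    fix I J
    have "pair_dist (proj_interval I) (proj_interval J) powr r \<le> (2 * pair_dist I J) powr r"
      using pair_dist_proj_interval_le pair_dist_nonneg assms by (intro powr_mono2) auto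
    then show "pair_dist (proj_interval I) (proj_interval J) powr r \<le> 2 powr r * pair_dist I J powr r"
      using pair_dist_nonneg by (simp add: powr_mult)
  qed
  also have "\<dots> = 2 powr r * power_cost r xs ys"
    by (simp add: power_cost_def sum_list_const_mult[symmetric] o_def split_def)
  finally show ?thesis .
qed

theorem lemma3:
  fixes A B :: barcode and p :: ereal
  assumes "barcode_F A" and "barcode_F B" and "1 \<le> p"
  shows "wasserstein p (proj A) (proj B) \<le> 2 * wasserstein p A B"
proof (cases "p = \<infinity>")
  case True
  then show ?thesis
    using Inf_matching_costs_proj_le[of bottleneck_cost 2 A B]
    by (simp add: wasserstein_infinity bottleneck_cost_nonneg bottleneck_cost_proj_le)
next
  case False
  define r where "r = real_of_ereal p"
  have "1 \<le> r" using \<open>1 \<le> p\<close> False unfolding r_def by (cases p) auto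
  let ?Inf = "\<lambda>A B. Inf {power_cost r xs ys | xs ys. (xs, ys) \<in> matchings A B}"
  have "?Inf (proj A) (proj B) \<le> 2 powr r * ?Inf A B"
    using \<open>1 \<le> r\<close> by (intro Inf_matching_costs_proj_le power_cost_nonneg power_cost_proj_le) auto
  then have "?Inf (proj A) (proj B) powr (1 / r) \<le> (2 powr r * ?Inf A B) powr (1 / r)"
    using \<open>1 \<le> r\<close> by (intro powr_mono2 Inf_matching_costs_nonneg power_cost_nonneg) auto
  also have "\<dots> = 2 * ?Inf A B powr (1 / r)"
    using \<open>1 \<le> r\<close> by (simp add: powr_mult powr_powr Inf_matching_costs_nonneg power_cost_nonneg)
  finally show ?thesis using False by (simp add: wasserstein_finite r_def)
qed

end
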